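(* Let $B=[\alpha_1,\beta_1]\times\dots\times[\alpha_d,\beta_d]$ be an axis-parallel box in $\mathbb{R}^d$ with a diagonally opposite pair of vertices $(\lambda,\lambda')$, and let $B'$ be another axis-parallel box in $\mathbb{R}^d$ with $B'\cap\{\lambda,\lambda'\}=\emptyset$. Then $B'$ is disjoint from at least two faces of $B$.
   Context: For a box $B=[\alpha_1,\beta_1]\times\dots\times[\alpha_d,\beta_d]$: a vertex is a point $(\lambda_1,\dots,\lambda_d)$ with $\lambda_j\in\{\alpha_j,\beta_j\}$ for all $j$; vertices $\lambda=(\lambda_1,\dots,\lambda_d)$ and $\lambda'=(\lambda'_1,\dots,\lambda'_d)$ are diagonally opposite if $\{\lambda_j,\lambda'_j\}=\{\alpha_j,\beta_j\}$ for every $j\in[d]$; a face of $B$ is a set of the form $B\cap\{x: x_j=\alpha_j\}$ or $B\cap\{x:x_j=\beta_j\}$ for some $j\in[d]$. *)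

theory Defs
  imports "HOL-Analysis.Analysis"
begin

text \<open>Axis-parallel boxes in R^d are modelled as cbox a b on real^'n
  (= product of the intervals [a$j, b$j]).\<close>

definition is_vertex :: "real^'n \<Rightarrow> real^'n \<Rightarrow> real^'n \<Rightarrow> bool" where
  "is_vertex \<alpha> \<beta> v \<longleftrightarrow> (\<forall>j. v$j = \<alpha>$j \<or> v$j = \<beta>$j)"

definition diag_opposite :: "real^'n \<Rightarrow> real^'n \<Rightarrow> real^'n \<Rightarrow> real^'n \<Rightarrow> bool" where
  "diag_opposite \<alpha> \<beta> v w \<longleftrightarrow> is_vertex \<alpha> \<beta> v \<and> is_vertex \<alpha> \<beta> w \<and>
     (\<forall>j. {v$j, w$j} = {\<alpha>$j, \<beta>$j})"

definition is_face :: "real^'n \<Rightarrow> real^'n \<Rightarrow> (real^'n) set \<Rightarrow> bool" where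
  "is_face \<alpha> \<beta> F \<longleftrightarrow> (\<exists>j. F = cbox \<alpha> \<beta> \<inter> {x. x$j = \<alpha>$j} \<or> F = cbox \<alpha> \<beta> \<inter> {x. x$j = \<beta>$j})"

end

theory Submission
  imports Defs
begin

text \<open>A point outside B' is separated from B' in some coordinate j, so the face of B
  through that point orthogonal to the j-th axis misses B'. Doing this for \<open>lam\<close> and
  \<open>lam'\<close> yields two faces disjoint from B'; they are distinct because \<open>lam\<close> and \<open>lam'\<close>
  differ in every coordinate, so \<open>lam\<close> lies on the first face but not on the second.\<close>

lemma not_in_cbox_cart_separating_component:
  fixes a b p :: "real^'n"
  assumes "p \<notin> cbox a b"
  obtains j where "\<forall>x\<in>cbox a b. x$j \<noteq> p$j"
proof -
  obtain j where "\<not> (a$j \<le> p$j \<and> p$j \<le> b$j)"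
    using assms by (auto simp: mem_box_cart)
  then have "\<forall>x\<in>cbox a b. x$j \<noteq> p$j"
    by (auto simp: mem_box_cart) (metis)+
  then show thesis by (rule that)
qed

lemma vertex_in_cbox:
  assumes "\<forall>j. \<alpha>$j \<le> \<beta>$j" and "is_vertex \<alpha> \<beta> v"
  shows "v \<in> cbox \<alpha> \<beta>"
  using assms unfolding is_vertex_def mem_box_cart by (metis order_refl)

lemma is_face_through_vertex:
  assumes "is_vertex \<alpha> \<beta> v"
  shows "is_face \<alpha> \<beta> (cbox \<alpha> \<beta> \<inter> {x. x$j = v$j})"
  using assms unfolding is_vertex_def is_face_def by metis

lemma diag_opposite_components_differ:
  assumes "\<forall>j. \<alpha>$j < \<beta>$j" and "diag_opposite \<alpha> \<beta> v w"
  shows "v$j \<noteq> w$j"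
  using assms unfolding diag_opposite_def by (metis doubleton_eq_iff less_irrefl)

theorem lemma3:
  fixes \<alpha> \<beta> \<gamma> \<delta> lam lam' :: "real^'n"
  assumes "\<forall>j. \<alpha>$j < \<beta>$j"
    and "diag_opposite \<alpha> \<beta> lam lam'"
    and "cbox \<gamma> \<delta> \<inter> {lam, lam'} = {}"
  shows "\<exists>F1 F2. is_face \<alpha> \<beta> F1 \<and> is_face \<alpha> \<beta> F2 \<and> F1 \<noteq> F2 \<and>
           cbox \<gamma> \<delta> \<inter> F1 = {} \<and> cbox \<gamma> \<delta> \<inter> F2 = {}"
proof -
  have vertices: "is_vertex \<alpha> \<beta> lam" "is_vertex \<alpha> \<beta> lam'"
    using assms(2) unfolding diag_opposite_def by auto
  obtain j where j: "\<forall>x\<in>cbox \<gamma> \<delta>. x$j \<noteq> lam$j"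
    using assms(3) by (auto elim: not_in_cbox_cart_separating_component)
  obtain k where k: "\<forall>x\<in>cbox \<gamma> \<delta>. x$k \<noteq> lam'$k"
    using assms(3) by (auto elim: not_in_cbox_cart_separating_component)
  define F1 where "F1 = cbox \<alpha> \<beta> \<inter> {x. x$j = lam$j}"
  define F2 where "F2 = cbox \<alpha> \<beta> \<inter> {x. x$k = lam'$k}"
  have "lam \<in> F1"
    using vertex_in_cbox[OF _ vertices(1)] assms(1) unfolding F1_def by (simp add: less_imp_le)
  moreover have "lam \<notin> F2"
    using diag_opposite_components_differ[OF assms(1,2)] unfolding F2_def by auto
  moreover have "is_face \<alpha> \<beta> F1" "is_face \<alpha> \<beta> F2"
    unfolding F1_def F2_def using vertices by (auto intro: is_face_through_vertex)
  moreover have "cbox \<gamma> \<delta> \<inter> F1 = {}" "cbox \<gamma> \<delta> \<inter> F2 = {}"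
    using j k unfolding F1_def F2_def by auto
  ultimately show ?thesis by blast
qed

end
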